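(* Let $d\ge0$ and $n>d$ be integers and let $T,T'\in L(n,d)$ with $T<T'$. Then for each $T_i\in T$ there exists a unique $T'_j\in T'$ such that $T'_j\subset T_i$.
   Context: For a finite set $X$ let $\operatorname{codim}_d(X)=d+1-|X|$. For a finite collection $\{T_1,\dots,T_l\}$ of pairwise distinct finite sets put $\rho_d(\{T_1,\dots,T_l\})=\sum_{i=1}^l\operatorname{codim}_d(T_i)$ (with $\rho_d(\emptyset)=0$) and $D_d(\{T_1,\dots,T_l\})=\operatorname{codim}_d(T_1\cap\cdots\cap T_l)-\rho_d(\{T_1,\dots,T_l\})$. For integers $d\ge0$, $n>d$, $L(n,d)$ is the set of all collections $T$ of subsets of $\{1,\dots,n\}$ such that (i) $D_d(T')>0$ for every $T'\subset T$ with $|T'|>1$, and (ii) $0\le|T_i|\le d$ for every $T_i\in T$. It is partially ordered by: $T<T'$ iff $\rho_d(T)<\rho_d(T')$ and for every $T_i\in T$ there exists $T'_j\in T'$ with $T'_j\subset T_i$. *)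

theory Defs
  imports Main
begin

definition codim :: "nat \<Rightarrow> nat set \<Rightarrow> int" where
  "codim d X = int d + 1 - int (card X)"

definition rho :: "nat \<Rightarrow> nat set set \<Rightarrow> int" where
  "rho d T = (\<Sum>X\<in>T. codim d X)"

definition Dd :: "nat \<Rightarrow> nat set set \<Rightarrow> int" where
  "Dd d T = codim d (\<Inter>T) - rho d T"

definition Lnd :: "nat \<Rightarrow> nat \<Rightarrow> nat set set set" where
  "Lnd n d = {T. (\<forall>X\<in>T. X \<subseteq> {1..n}) \<and>
     (\<forall>T'. T' \<subseteq> T \<and> card T' > 1 \<longrightarrow> Dd d T' > 0) \<and>
     (\<forall>X\<in>T. card X \<le> d)}"

definition Lless :: "nat \<Rightarrow> nat set set \<Rightarrow> nat set set \<Rightarrow> bool" where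
  "Lless d T T' \<longleftrightarrow> rho d T < rho d T' \<and> (\<forall>X\<in>T. \<exists>Y\<in>T'. Y \<subseteq> X)"

end

theory Submission
  imports Defs
begin

text \<open>Existence is part of \<open>T < T'\<close>. For uniqueness, two distinct members \<open>Y\<^sub>1, Y\<^sub>2\<close> of
  \<open>T'\<close> satisfy \<open>D\<^sub>d({Y\<^sub>1, Y\<^sub>2}) > 0\<close>, which by inclusion--exclusion says
  \<open>|Y\<^sub>1 \<union> Y\<^sub>2| > d + 1\<close>; so they cannot both lie in a set \<open>T\<^sub>i\<close> of size at most \<open>d\<close>.\<close>

lemma Dd_doubleton:
  assumes "Y1 \<noteq> Y2"
  shows "Dd d {Y1, Y2} = codim d (Y1 \<inter> Y2) - codim d Y1 - codim d Y2"
  using assms unfolding Dd_def rho_def by simp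

lemma card_Un_gt_if_Dd_doubleton_pos:
  assumes "finite Y1" "finite Y2" "Y1 \<noteq> Y2" "Dd d {Y1, Y2} > 0"
  shows "d + 1 < card (Y1 \<union> Y2)"
proof -
  have "int d + 1 < int (card Y1) + int (card Y2) - int (card (Y1 \<inter> Y2))"
    using assms(3,4) by (simp add: Dd_doubleton codim_def)
  moreover have "card (Y1 \<union> Y2) + card (Y1 \<inter> Y2) = card Y1 + card Y2"
    using assms(1,2) by (rule card_Un_Int[symmetric])
  ultimately show ?thesis by linarith
qed

lemma Lnd_at_most_one_below:
  assumes "T \<in> Lnd n d" "finite X" "card X \<le> d + 1"
    and "Y1 \<in> T" "Y1 \<subseteq> X" "Y2 \<in> T" "Y2 \<subseteq> X"
  shows "Y1 = Y2"
proof (rule ccontr)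
  assume distinct: "Y1 \<noteq> Y2"
  with assms(1,4,6) have "Dd d {Y1, Y2} > 0"
    unfolding Lnd_def by auto
  with distinct assms(2,5,7) have "d + 1 < card (Y1 \<union> Y2)"
    by (intro card_Un_gt_if_Dd_doubleton_pos) (auto intro: finite_subset)
  moreover have "card (Y1 \<union> Y2) \<le> card X"
    using assms(2,5,7) by (intro card_mono) auto
  ultimately show False
    using assms(3) by linarith
qed

theorem proposition3p3:
  fixes n d :: nat and T T' :: "nat set set"
  assumes "n > d"
    and "T \<in> Lnd n d" and "T' \<in> Lnd n d"
    and "Lless d T T'"
    and "X \<in> T"
  shows "\<exists>!Y. Y \<in> T' \<and> Y \<subseteq> X"
proof -
  have "\<exists>Y. Y \<in> T' \<and> Y \<subseteq> X"
    using assms(4,5) unfolding Lless_def by blast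
  moreover have "finite X" "card X \<le> d + 1"
    using assms(2,5) unfolding Lnd_def by (auto intro: finite_subset)
  ultimately show ?thesis
    using Lnd_at_most_one_below[OF assms(3)] by blast
qed

end
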